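(* For every $\alpha>-\mu$ there exists $\gamma(\alpha)>0$ such that for every $N\in\mathbb N$ we have $\sum_{k=1}^{N-1}\frac{1}{\nu_{k,N}+\alpha}\leq\gamma(\alpha)$.
   Context: Fix $\mu>1$. For $N\in\mathbb N$ and $k\in\{0,\dots,N-1\}$ let $\nu_{k,N}=\mu\frac{\sin^2(k\pi/N)}{\sin^2(\pi/N)}$ (the eigenvalues of the discrete Laplacian $K_N$ on $\mathbb R^N$ with periodic boundary conditions, $(K_Nx)_k=\frac{\mu}{4\sin^2(\pi/N)}(2x_k-x_{k+1}-x_{k-1})$). An empty sum is $0$. *)

theory Defs
  imports Complex_Main
begin

text \<open>Eigenvalues of the periodic discrete Laplacian K_N.\<close>
definition nu :: "real \<Rightarrow> nat \<Rightarrow> nat \<Rightarrow> real" where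
  "nu \<mu> k N = \<mu> * (sin (real k * pi / real N))\<^sup>2 / (sin (pi / real N))\<^sup>2"

end

theory Submission
  imports Defs "HOL-Analysis.Gamma_Function"
begin

text \<open>For \<open>0 < k < N\<close> put \<open>m = min k (N - k)\<close>, so that \<open>nu \<mu> k N = nu \<mu> m N\<close> and
  \<open>m\<pi>/N \<le> \<pi>/2\<close>. As \<open>sin\<close> increases on \<open>[0, \<pi>/2]\<close>, \<open>sin x \<ge> x/3\<close> there and
  \<open>sin (\<pi>/N) \<le> \<pi>/N\<close>, the quotient \<open>sin (m\<pi>/N) / sin (\<pi>/N)\<close> is at least \<open>1\<close> and at least
  \<open>m/3\<close>; hence \<open>nu \<mu> k N \<ge> \<mu>\<close> and \<open>nu \<mu> k N \<ge> \<mu> m\<^sup>2/9\<close>. The first bound gives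
  \<open>nu \<mu> k N + \<alpha> \<ge> \<delta> \<cdot> nu \<mu> k N\<close> with \<open>\<delta> = min 1 ((\<mu> + \<alpha>)/\<mu>) > 0\<close>, so each term is at most
  \<open>9/(\<delta> \<mu> m\<^sup>2)\<close>, and the sum is bounded by twice the Basel sum \<open>\<pi>\<^sup>2/6\<close>.\<close>

lemma sin_ge_third:
  fixes x :: real
  assumes "0 \<le> x" "x \<le> 2"
  shows "x / 3 \<le> sin x"
proof -
  have "\<bar>sin x - (\<Sum>m<3. sin_coeff m * x ^ m)\<bar> \<le> inverse (fact 3) * \<bar>x\<bar> ^ 3"
    by (rule Maclaurin_sin_bound)
  moreover have "(\<Sum>m<3. sin_coeff m * x ^ m) = x"
    by (simp add: numeral_3_eq_3 sin_coeff_def)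
  moreover have "inverse (fact 3) * \<bar>x\<bar> ^ 3 = x ^ 3 / 6"
    using assms by (simp add: numeral_3_eq_3)
  ultimately have "x - x ^ 3 / 6 \<le> sin x" by linarith
  moreover have "x ^ 3 \<le> 4 * x"
  proof -
    have "x * x \<le> 4" using assms mult_mono[of x 2 x 2] by simp
    then show ?thesis using assms mult_right_mono[of "x * x" 4 x] by (simp add: power3_eq_cube)
  qed
  ultimately show ?thesis by linarith
qed

lemma nu_reflect:
  assumes "k \<le> N"
  shows "nu \<mu> (N - k) N = nu \<mu> k N"
proof (cases "N = 0")
  case False
  then have "real (N - k) * pi / real N = pi - real k * pi / real N"
    using assms by (simp add: field_simps)
  then show ?thesis by (simp add: nu_def)
qed (use assms in simp)

lemma nu_lower_bounds:
  assumes "0 \<le> \<mu>" "1 \<le> m" "2 * m \<le> N"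
  shows "\<mu> \<le> nu \<mu> m N" and "\<mu> * (real m)\<^sup>2 / 9 \<le> nu \<mu> m N"
proof -
  define h where "h = pi / real N"
  define x where "x = real m * h"
  have h_pos: "0 < h" using assms by (simp add: h_def)
  have "h \<le> x" using assms h_pos by (simp add: x_def)
  have "x \<le> pi / 2"
    using assms pi_gt_zero by (simp add: x_def h_def field_simps)
  have sin_h_pos: "0 < sin h"
    using h_pos \<open>h \<le> x\<close> \<open>x \<le> pi / 2\<close> by (intro sin_gt_zero) auto
  have "sin h \<le> sin x"
    using h_pos \<open>h \<le> x\<close> \<open>x \<le> pi / 2\<close> by (intro sin_monotone_2pi_le) auto
  then have ratio_ge_1: "1 \<le> sin x / sin h" using sin_h_pos by simp
  have "real m / 3 = (x / 3) / h" using h_pos by (simp add: x_def)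
  also have "\<dots> \<le> sin x / h"
    using h_pos \<open>x \<le> pi / 2\<close> pi_less_4 \<open>h \<le> x\<close> by (intro divide_right_mono sin_ge_third) auto
  also have "\<dots> \<le> sin x / sin h"
    using h_pos sin_h_pos \<open>sin h \<le> sin x\<close> by (intro divide_left_mono sin_x_le_x) auto
  finally have ratio_ge_m: "real m / 3 \<le> sin x / sin h" .
  have nu_eq: "nu \<mu> m N = \<mu> * (sin x / sin h)\<^sup>2"
    by (simp add: nu_def x_def h_def power_divide)
  show "\<mu> \<le> nu \<mu> m N"
    unfolding nu_eq using assms(1) ratio_ge_1
    by (metis mult.right_neutral mult_left_mono one_le_power)
  have "(real m / 3)\<^sup>2 \<le> (sin x / sin h)\<^sup>2"
    using ratio_ge_m by (intro power_mono) auto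
  then show "\<mu> * (real m)\<^sup>2 / 9 \<le> nu \<mu> m N"
    unfolding nu_eq using assms(1) mult_left_mono[of "(real m / 3)\<^sup>2" "(sin x / sin h)\<^sup>2" \<mu>]
    by (simp add: power_divide)
qed

lemma min_one_mult_le_add:
  fixes \<mu> \<alpha> \<nu> :: real
  assumes "0 < \<mu>" "\<mu> \<le> \<nu>"
  shows "min 1 ((\<mu> + \<alpha>) / \<mu>) * \<nu> \<le> \<nu> + \<alpha>"
proof (cases "0 \<le> \<alpha>")
  case True
  have "min 1 ((\<mu> + \<alpha>) / \<mu>) * \<nu> \<le> \<nu>"
    using assms True by (intro mult_left_le_one_le) auto
  then show ?thesis using True by linarith
next
  case False
  have "min 1 ((\<mu> + \<alpha>) / \<mu>) * \<nu> \<le> (\<mu> + \<alpha>) / \<mu> * \<nu>"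
    using assms by (intro mult_right_mono) auto
  also have "\<dots> = \<nu> + \<alpha> * (\<nu> / \<mu>)" using assms by (simp add: field_simps)
  also have "\<dots> \<le> \<nu> + \<alpha>"
    using False assms mult_left_mono_neg[of 1 "\<nu> / \<mu>" \<alpha>] by simp
  finally show ?thesis .
qed

lemma inverse_nu_add_le:
  fixes \<mu> \<alpha> :: real
  assumes "0 < \<mu>" "- \<mu> < \<alpha>" "0 < k" "k < N"
  shows "1 / (nu \<mu> k N + \<alpha>)
    \<le> 9 / (min 1 ((\<mu> + \<alpha>) / \<mu>) * \<mu>) * (1 / (real k)\<^sup>2 + 1 / (real (N - k))\<^sup>2)"
proof -
  define \<delta> where "\<delta> = min 1 ((\<mu> + \<alpha>) / \<mu>)"
  define m where "m = min k (N - k)"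
  have "0 < \<delta>" using assms by (simp add: \<delta>_def)
  have "1 \<le> m" "2 * m \<le> N" using assms by (auto simp: m_def)
  have "nu \<mu> k N = nu \<mu> m N"
    using assms nu_reflect[of k N \<mu>] by (auto simp: m_def min_def)
  then have "\<delta> * (\<mu> * (real m)\<^sup>2 / 9) \<le> \<delta> * nu \<mu> k N"
    using nu_lower_bounds[of \<mu> m N] assms \<open>0 < \<delta>\<close> \<open>1 \<le> m\<close> \<open>2 * m \<le> N\<close> by simp
  also have "\<dots> \<le> nu \<mu> k N + \<alpha>"
    unfolding \<delta>_def using assms nu_lower_bounds(1)[of \<mu> m N] \<open>nu \<mu> k N = nu \<mu> m N\<close>
      \<open>1 \<le> m\<close> \<open>2 * m \<le> N\<close> by (intro min_one_mult_le_add) auto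
  finally have lower: "\<delta> * \<mu> * (real m)\<^sup>2 / 9 \<le> nu \<mu> k N + \<alpha>" by simp
  have "0 < \<delta> * \<mu> * (real m)\<^sup>2 / 9" using \<open>0 < \<delta>\<close> \<open>1 \<le> m\<close> assms by simp
  then have "1 / (nu \<mu> k N + \<alpha>) \<le> 1 / (\<delta> * \<mu> * (real m)\<^sup>2 / 9)"
    using lower by (intro divide_left_mono) auto
  also have "\<dots> = 9 / (\<delta> * \<mu>) * (1 / (real m)\<^sup>2)" by simp
  also have "\<dots> \<le> 9 / (\<delta> * \<mu>) * (1 / (real k)\<^sup>2 + 1 / (real (N - k))\<^sup>2)"
    using \<open>0 < \<delta>\<close> assms by (intro mult_left_mono) (auto simp: m_def min_def)
  finally show ?thesis unfolding \<delta>_def .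
qed

lemma sum_inverse_squares_le: "(\<Sum>k=1..n. 1 / (real k)\<^sup>2) \<le> pi\<^sup>2 / 6"
proof -
  have "(\<Sum>k=1..n. 1 / (real k)\<^sup>2) = (\<Sum>k<n. 1 / real ((k + 1)\<^sup>2))"
    by (induction n) (simp_all add: add.commute)
  also have "\<dots> \<le> (\<Sum>k. 1 / real ((k + 1)\<^sup>2))"
    using inverse_squares_sums by (intro sum_le_suminf) (auto simp: sums_iff)
  also have "\<dots> = pi\<^sup>2 / 6"
    using inverse_squares_sums by (rule sums_unique[symmetric])
  finally show ?thesis .
qed

lemma sum_inverse_squares_reflect_le:
  "(\<Sum>k=1..N-1. 1 / (real k)\<^sup>2 + 1 / (real (N - k))\<^sup>2) \<le> pi\<^sup>2 / 3"
proof -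
  have "(\<Sum>k=1..N-1. 1 / (real (N - k))\<^sup>2) = (\<Sum>k=1..N-1. 1 / (real (N - (N - 1 + 1 - k)))\<^sup>2)"
    by (rule sum.atLeastAtMost_rev)
  also have "\<dots> = (\<Sum>k=1..N-1. 1 / (real k)\<^sup>2)"
    by (intro sum.cong) auto
  finally have "(\<Sum>k=1..N-1. 1 / (real k)\<^sup>2 + 1 / (real (N - k))\<^sup>2)
      = 2 * (\<Sum>k=1..N-1. 1 / (real k)\<^sup>2)"
    by (simp only: sum.distrib mult_2)
  then show ?thesis using sum_inverse_squares_le[of "N - 1"] by linarith
qed

theorem lemma5p1:
  fixes \<mu> \<alpha> :: real
  assumes "\<mu> > 1" and "\<alpha> > - \<mu>"
  shows "\<exists>\<gamma>>0. \<forall>N::nat. (\<Sum>k=1..N-1. 1 / (nu \<mu> k N + \<alpha>)) \<le> \<gamma>"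
proof -
  define C where "C = 9 / (min 1 ((\<mu> + \<alpha>) / \<mu>) * \<mu>)"
  have "0 < C" using assms by (simp add: C_def)
  have "(\<Sum>k=1..N-1. 1 / (nu \<mu> k N + \<alpha>)) \<le> C * (pi\<^sup>2 / 3)" for N
  proof -
    have "(\<Sum>k=1..N-1. 1 / (nu \<mu> k N + \<alpha>))
        \<le> (\<Sum>k=1..N-1. C * (1 / (real k)\<^sup>2 + 1 / (real (N - k))\<^sup>2))"
      unfolding C_def using assms by (intro sum_mono inverse_nu_add_le) auto
    also have "\<dots> \<le> C * (pi\<^sup>2 / 3)"
      unfolding sum_distrib_left[symmetric]
      using \<open>0 < C\<close> sum_inverse_squares_reflect_le by (intro mult_left_mono) auto
    finally show ?thesis .
  qed
  moreover have "0 < C * (pi\<^sup>2 / 3)" using \<open>0 < C\<close> by simp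
  ultimately show ?thesis by blast
qed

end
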